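(* Let $G$ be a finite abelian group of even order, $S$ a symmetric generating set, and $s\in S$ such that $|G'|\ge4$ is even. (1) If $(s,t,s^{-1},t^{-1})\in\mathcal H$ for every $t\in S'$, then $\mathcal H'\subseteq\mathcal H$. (2) If $2(s,t,s^{-1},t^{-1})\in\mathcal H$ for every $t\in S'$, then $2\mathcal H'\subseteq\mathcal H$.
   Context: $X=\mathrm{Cay}(G;S)$ has vertex set $G$ and edges $\{g,gs\}$. For the chosen $s$: $S'=S\setminus\{s,s^{-1}\}$, $G'=\langle S'\rangle$, $X'=\mathrm{Cay}(G';S')$. A flow is $f:G\times S\to\mathbb Z$ with $f(v,a)=-f(va,a^{-1})$ and $\sum_af(v,a)=0$; closed walks $(t_1,\dots,t_n)$ (visiting $e,t_1,t_1t_2,\dots$) are identified with flows ($+1$ on traversed oriented edges, $-1$ on reversals). $\mathcal H$ is the subgroup of flows on $X$ generated by oriented hamiltonian cycles of $X$; $\mathcal H'$ is the subgroup of flows on $X'$ generated by oriented hamiltonian cycles of $X'$, regarded as flows on $X$ by extending by $0$. *)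

theory Defs
  imports Main "HOL-Library.Function_Algebras" "HOL-Computational_Algebra.Group_Closure"
begin

text \<open>Groups are written additively: a finite abelian group is a type of class
  ab_group_add and finite; the identity e is 0, g s is g + s, s^-1 is - s.
  A flow is a function f :: 'a => 'a => int with f v a the value on the oriented
  edge (v, v + a) labelled by the generator a; outside the relevant G x S it is 0.\<close>

fun walk_flow_from :: "'a::ab_group_add \<Rightarrow> 'a list \<Rightarrow> ('a \<Rightarrow> 'a \<Rightarrow> int)" where
  "walk_flow_from v [] = (\<lambda>x a. 0)"
| "walk_flow_from v (t # ts) =
     (\<lambda>x a. (if x = v \<and> a = t then 1 else 0) - (if x = v + t \<and> a = - t then 1 else 0)
            + walk_flow_from (v + t) ts x a)"

definition walk_flow :: "'a::ab_group_add list \<Rightarrow> ('a \<Rightarrow> 'a \<Rightarrow> int)" where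
  "walk_flow ts = walk_flow_from 0 ts"

text \<open>Vertices visited: e, t_1, t_1 t_2, ..., (first n, excluding the return to e).\<close>
definition walk_vertices :: "'a::ab_group_add list \<Rightarrow> 'a list" where
  "walk_vertices ts = map (\<lambda>i. sum_list (take i ts)) [0..<length ts]"

definition ham_cycle :: "'a::ab_group_add set \<Rightarrow> 'a set \<Rightarrow> 'a list \<Rightarrow> bool" where
  "ham_cycle V T ts \<longleftrightarrow> set ts \<subseteq> T \<and> sum_list ts = 0 \<and> length ts \<ge> 3 \<and>
     distinct (walk_vertices ts) \<and> set (walk_vertices ts) = V"

definition ham_flows :: "'a::ab_group_add set \<Rightarrow> 'a set \<Rightarrow> ('a \<Rightarrow> 'a \<Rightarrow> int) set" where
  "ham_flows V T = group_closure {walk_flow ts | ts. ham_cycle V T ts}"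

end

(* Let k be least with k > 0 and k s in G' = <S'>, so that every element of G is uniquely
   y + j s with y in G' and j < k.  A hamiltonian cycle (t_1, ..., t_m) of X' with vertices
   v_1, ..., v_m lifts to a hamiltonian cycle of X that at each v_i runs through the column
   v_i, v_i + s, ..., v_i + (k - 1) s, upwards for even i and downwards for odd i (so m = |G'|
   must be even), and then takes the step t_i.  Modulo the ladder of squares (s, t_i, -s, -t_i)
   based at v_i + j s, the upward column at v_i equals the upward column at v_(i+1), which
   cancels against the downward column of the next block.  Hence the two flows differ by a sum
   of translated squares.  Rotating a hamiltonian cycle of X shows that H is invariant under
   translation, so the hypothesis puts all these squares, and hence every hamiltonian cycle of
   X', into H (doubled, in part (2)). *)

theory Submission
  imports Defs
begin

section \<open>Group closures and cosets\<close>

lemma group_closure_image_subset: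
  assumes hom: "\<And>x y. h (x - y) = h x - h y"
    and "h ` A \<subseteq> group_closure B"
  shows "h ` group_closure A \<subseteq> group_closure B"
proof clarify
  fix x assume "x \<in> group_closure A"
  then show "h x \<in> group_closure B"
  proof induction
    case (base x)
    have "h 0 = 0"
      using hom [of 0 0] by simp
    with base assms(2) show ?case
      by auto
  next
    case (diff x y)
    then show ?case
      by (simp add: hom group_closure.diff)
  qed
qed

lemma group_closure_subsetI: "A \<subseteq> group_closure B \<Longrightarrow> group_closure A \<subseteq> group_closure B"
  using group_closure_image_subset [of id A B] by simp

lemma group_closure_subset_insert_Diff: "group_closure S \<subseteq> group_closure (insert s (S - {s, - s}))"
proof (rule group_closure_subsetI, rule subsetI)
  fix x
  assume "x \<in> S"
  then show "x \<in> group_closure (insert s (S - {s, - s}))"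
    using group_closure.base [of s] group_closure.base [of x] by (cases "x = - s") auto
qed

lemma sum_in_group_closure:
  "(\<And>x. x \<in> I \<Longrightarrow> f x \<in> group_closure A) \<Longrightarrow> sum f I \<in> group_closure A"
  by (induction I rule: infinite_finite_induct) (auto intro: group_closure_add)

lemma int_scale_in_group_closure:
  fixes f :: "'a \<Rightarrow> 'b \<Rightarrow> int"
  assumes f: "f \<in> group_closure A"
  shows "(\<lambda>x y. c * f x y) \<in> group_closure A"
proof -
  have nat_scale: "(\<lambda>x y. int n * f x y) \<in> group_closure A" for n
  proof (induction n)
    case (Suc n)
    have "(\<lambda>x y. int (Suc n) * f x y) = f + (\<lambda>x y. int n * f x y)"
      by (simp add: fun_eq_iff algebra_simps)
    then show ?case
      using f Suc by (simp add: group_closure_add)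
  qed (simp add: zero_fun_def [symmetric])
  show ?thesis
  proof (cases "c \<ge> 0")
    case True
    then show ?thesis
      using nat_scale [of "nat c"] by simp
  next
    case False
    have "(\<lambda>x y. c * f x y) = - (\<lambda>x y. int (nat (- c)) * f x y)"
      using False by (simp add: fun_eq_iff)
    then show ?thesis
      using nat_scale [of "nat (- c)"] by simp
  qed
qed

lemma group_closure_subset_if_translation_closed:
  assumes "0 \<in> W" and closed: "\<And>w g. w \<in> W \<Longrightarrow> g \<in> B \<Longrightarrow> w + g \<in> W \<and> w - g \<in> W"
  shows "group_closure B \<subseteq> W"
proof -
  have "\<forall>w\<in>W. w + g \<in> W \<and> w - g \<in> W" if "g \<in> group_closure B" for g
    using that
  proof induction
    case (base g)
    then show ?case
      using closed by auto
  next
    case (diff g h)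
    have "w + (g - h) = (w + g) - h" "w - (g - h) = (w - g) + h" for w
      by (simp_all add: algebra_simps)
    with diff show ?case
      by metis
  qed
  with \<open>0 \<in> W\<close> show ?thesis
    by (metis add_0 subsetI)
qed

primrec nsmul :: "nat \<Rightarrow> 'a::ab_group_add \<Rightarrow> 'a" where
  "nsmul 0 a = 0"
| "nsmul (Suc n) a = a + nsmul n a"

lemma nsmul_add: "nsmul (i + j) a = nsmul i a + nsmul j a"
  by (induction i) (simp_all add: add.assoc)

lemma nsmul_diff: "j \<le> i \<Longrightarrow> nsmul i a - nsmul j a = nsmul (i - j) a"
  using nsmul_add [of "i - j" j a] by simp

lemma nsmul_uminus: "nsmul n (- a) = - nsmul n a"
  by (induction n) (simp_all add: algebra_simps)

lemma sum_list_replicate_eq_nsmul: "sum_list (replicate n a) = nsmul n a"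
  by (induction n) simp_all

lemma exists_nsmul_eq_0:
  fixes a :: "'a::{ab_group_add,finite}"
  obtains n where "0 < n" "nsmul n a = 0"
proof -
  have "\<not> inj (\<lambda>n. nsmul n a)"
    using finite_imageD [of "\<lambda>n. nsmul n a" UNIV] by auto
  then obtain i j where "nsmul i a = nsmul j a" "j < i"
    unfolding inj_def by (metis linorder_neqE_nat)
  then show thesis
    using that [of "i - j"] nsmul_diff [of j i a] by simp
qed

lemma nsmul_diff_in_group_closure_imp_eq:
  assumes least: "\<And>i. 0 < i \<Longrightarrow> i < k \<Longrightarrow> nsmul i s \<notin> group_closure A"
    and "j < k" "j' < k" "nsmul j s - nsmul j' s \<in> group_closure A"
  shows "j = j'"
proof -
  have "j = j'" if "j' \<le> j" "j < k" "nsmul j s - nsmul j' s \<in> group_closure A" for j j'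
    using least [of "j - j'"] that nsmul_diff [of j' j s] by (cases "j' < j") auto
  moreover have "nsmul j' s - nsmul j s \<in> group_closure A"
    using assms(4) group_closure_minus_iff by (metis minus_diff_eq)
  ultimately show ?thesis
    using assms(2-4) by (metis nat_le_linear)
qed

definition coset_segment :: "'a::ab_group_add set \<Rightarrow> 'a \<Rightarrow> nat \<Rightarrow> 'a set" where
  "coset_segment A s k = {y + nsmul j s | y j. y \<in> group_closure A \<and> j < k}"

lemma coset_segment_step:
  assumes "0 < k" and k_mem: "nsmul k s \<in> group_closure A"
    and "w \<in> coset_segment A s k" and "g \<in> insert s A"
  shows "w + g \<in> coset_segment A s k \<and> w - g \<in> coset_segment A s k"
proof -
  have memI: "y + nsmul j s \<in> coset_segment A s k" if "y \<in> group_closure A" "j < k" for y j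
    using that unfolding coset_segment_def by blast
  obtain y j where y: "y \<in> group_closure A" and j: "j < k" and w: "w = y + nsmul j s"
    using \<open>w \<in> coset_segment A s k\<close> coset_segment_def by blast
  have "w + s \<in> coset_segment A s k"
  proof (cases "Suc j < k")
    case True
    then show ?thesis
      using memI [OF y, of "Suc j"] w by (simp add: add_ac)
  next
    case False
    then have "k = Suc j"
      using j by simp
    then have "w + s = (y + nsmul k s) + nsmul 0 s"
      using w by (simp add: add_ac)
    then show ?thesis
      using memI [of "y + nsmul k s" 0] y k_mem \<open>0 < k\<close> by (simp add: group_closure_add)
  qed
  moreover have "w - s \<in> coset_segment A s k"
  proof (cases j)
    case 0
    then have "w - s = (y - nsmul k s) + nsmul (k - 1) s"
      using w \<open>0 < k\<close> nsmul_diff [of 1 k s] by (simp add: algebra_simps)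
    then show ?thesis
      using memI [of "y - nsmul k s" "k - 1"] y k_mem \<open>0 < k\<close> by (simp add: group_closure.diff)
  next
    case (Suc i)
    then show ?thesis
      using memI [OF y, of i] w j by (simp add: algebra_simps)
  qed
  moreover have "w + a \<in> coset_segment A s k" "w - a \<in> coset_segment A s k" if "a \<in> A" for a
    using memI [of "y + a" j] memI [of "y - a" j] y j w that
    by (simp_all add: group_closure_add group_closure.diff group_closure.base algebra_simps)
  ultimately show ?thesis
    using \<open>g \<in> insert s A\<close> by blast
qed

lemma coset_segment_eq_UNIV:
  assumes "group_closure (insert s A) = UNIV"
    and "0 < k" and "nsmul k s \<in> group_closure A"
  shows "coset_segment A s k = UNIV"
proof -
  have "0 \<in> coset_segment A s k"
    using \<open>0 < k\<close> unfolding coset_segment_def by force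
  then have "group_closure (insert s A) \<subseteq> coset_segment A s k"
    using coset_segment_step [OF assms(2,3)] by (intro group_closure_subset_if_translation_closed)
  with assms(1) show ?thesis
    by blast
qed

lemma coset_decomposition:
  fixes s :: "'a::{ab_group_add,finite}"
  assumes "group_closure (insert s A) = UNIV"
  obtains k where "0 < k"
    and "\<And>j j'. j < k \<Longrightarrow> j' < k \<Longrightarrow> nsmul j s - nsmul j' s \<in> group_closure A \<Longrightarrow> j = j'"
    and "\<And>x. \<exists>y\<in>group_closure A. \<exists>j<k. x = y + nsmul j s"
proof -
  obtain n where "0 < n" "nsmul n s = 0"
    using exists_nsmul_eq_0 by blast
  then have ex: "\<exists>k. 0 < k \<and> nsmul k s \<in> group_closure A"
    by auto
  define k where "k = (LEAST k. 0 < k \<and> nsmul k s \<in> group_closure A)"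
  have k_pos: "0 < k" and k_mem: "nsmul k s \<in> group_closure A"
    using LeastI_ex [OF ex] by (simp_all add: k_def)
  have least: "nsmul i s \<notin> group_closure A" if "0 < i" "i < k" for i
    using not_less_Least [of i "\<lambda>k. 0 < k \<and> nsmul k s \<in> group_closure A"] that
    by (auto simp: k_def)
  show thesis
  proof (rule that)
    show "0 < k"
      by (fact k_pos)
    show "j = j'" if "j < k" "j' < k" "nsmul j s - nsmul j' s \<in> group_closure A" for j j'
      using nsmul_diff_in_group_closure_imp_eq [OF least that] .
    show "\<exists>y\<in>group_closure A. \<exists>j<k. x = y + nsmul j s" for x
      using coset_segment_eq_UNIV [OF assms k_pos k_mem] unfolding coset_segment_def by blast
  qed
qed

section \<open>Walks and their flows\<close>

fun walk_vertices_from :: "'a::ab_group_add \<Rightarrow> 'a list \<Rightarrow> 'a list" where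
  "walk_vertices_from v [] = []"
| "walk_vertices_from v (t # ts) = v # walk_vertices_from (v + t) ts"

lemma length_walk_vertices_from [simp]: "length (walk_vertices_from v ts) = length ts"
  by (induction ts arbitrary: v) simp_all

lemma walk_vertices_from_append:
  "walk_vertices_from v (xs @ ys) = walk_vertices_from v xs @ walk_vertices_from (v + sum_list xs) ys"
  by (induction xs arbitrary: v) (simp_all add: add.assoc)

lemma walk_vertices_from_translate:
  "walk_vertices_from (c + v) ts = map ((+) c) (walk_vertices_from v ts)"
  by (induction ts arbitrary: v) (simp_all add: add.assoc)

lemma walk_vertices_from_conv_map:
  "walk_vertices_from v ts = map (\<lambda>i. v + sum_list (take i ts)) [0..<length ts]"
proof (induction ts arbitrary: v)
  case (Cons t ts)
  show ?case
    by (simp only: length_Cons map_upt_Suc) (simp add: Cons add.assoc)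
qed simp

lemma walk_vertices_eq: "walk_vertices ts = walk_vertices_from 0 ts"
  by (simp add: walk_vertices_def walk_vertices_from_conv_map)

lemma sum_list_map_uminus [simp]: "sum_list (map uminus xs) = - sum_list (xs :: 'a::ab_group_add list)"
  by (induction xs) simp_all

lemma walk_vertices_from_reverse:
  "walk_vertices_from (v + sum_list xs) (rev (map uminus xs) @ [t])
     = rev (walk_vertices_from v (xs @ [t']))"
proof (induction xs arbitrary: v)
  case (Cons x xs)
  show ?case
    using Cons [of "v + x"] by (simp add: walk_vertices_from_append add.assoc)
qed simp

lemma walk_vertices_from_replicate:
  "walk_vertices_from v (replicate r a @ [t]) = map (\<lambda>j. v + nsmul j a) [0..<Suc r]"
proof (induction r arbitrary: v)
  case (Suc r)
  show ?case
    by (simp only: replicate_Suc append_Cons walk_vertices_from.simps map_upt_Suc Suc)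
      (simp add: add_ac)
qed simp

lemma distinct_concat_map:
  assumes "distinct xs" "\<And>x. x \<in> set xs \<Longrightarrow> distinct (f x)"
    and "\<And>x y. x \<in> set xs \<Longrightarrow> y \<in> set xs \<Longrightarrow> x \<noteq> y \<Longrightarrow> set (f x) \<inter> set (f y) = {}"
  shows "distinct (concat (map f xs))"
  using assms
proof (induction xs)
  case (Cons x xs)
  have "set (f x) \<inter> set (concat (map f xs)) = {}"
    using Cons.prems by fastforce
  with Cons show ?case
    by simp
qed simp

definition edge_flow :: "'a::ab_group_add \<Rightarrow> 'a \<Rightarrow> 'a \<Rightarrow> 'a \<Rightarrow> int" where
  "edge_flow v t = (\<lambda>x a. (if x = v \<and> a = t then 1 else 0) - (if x = v + t \<and> a = - t then 1 else 0))"

lemma walk_flow_from_Nil_eq [simp]: "walk_flow_from v [] = 0"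
  by (simp add: fun_eq_iff)

lemma walk_flow_from_Cons_eq [simp]:
  "walk_flow_from v (t # ts) = edge_flow v t + walk_flow_from (v + t) ts"
  by (simp add: fun_eq_iff edge_flow_def)

declare walk_flow_from.simps [simp del]

lemma walk_flow_from_append:
  "walk_flow_from v (xs @ ys) = walk_flow_from v xs + walk_flow_from (v + sum_list xs) ys"
  by (induction xs arbitrary: v) (simp_all add: add.assoc)

lemma edge_flow_reverse: "edge_flow (v + a) (- a) = - edge_flow v a"
  by (auto simp: fun_eq_iff edge_flow_def)

lemma walk_flow_from_reverse:
  "walk_flow_from (v + sum_list xs) (rev (map uminus xs)) = - walk_flow_from v xs"
proof (induction xs arbitrary: v)
  case (Cons x xs)
  show ?case
    using Cons [of "v + x"] edge_flow_reverse [of v x]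
    by (simp add: walk_flow_from_append add.assoc fun_eq_iff)
qed simp

lemma walk_flow_from_conv_sum:
  "walk_flow_from v ts = (\<Sum>i<length ts. edge_flow (v + sum_list (take i ts)) (ts ! i))"
proof (induction ts arbitrary: v)
  case (Cons t ts)
  show ?case
    by (simp add: Cons sum.lessThan_Suc_shift add.assoc del: sum.lessThan_Suc)
qed simp

definition translate_flow :: "'a::ab_group_add \<Rightarrow> ('a \<Rightarrow> 'a \<Rightarrow> int) \<Rightarrow> 'a \<Rightarrow> 'a \<Rightarrow> int" where
  "translate_flow g f = (\<lambda>x a. f (x - g) a)"

lemma translate_flow_diff: "translate_flow g (f - h) = translate_flow g f - translate_flow g h"
  by (simp add: fun_eq_iff translate_flow_def)

lemma walk_flow_from_translate: "walk_flow_from (g + v) ts = translate_flow g (walk_flow_from v ts)"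
proof (induction ts arbitrary: v)
  case (Cons t ts)
  have "edge_flow (g + v) t = translate_flow g (edge_flow v t)"
    by (auto simp: fun_eq_iff translate_flow_def edge_flow_def algebra_simps)
  then show ?case
    using Cons [of "v + t"] by (simp add: fun_eq_iff translate_flow_def add.assoc)
qed (simp add: fun_eq_iff translate_flow_def)

lemma sum_list_concat_blocks:
  assumes "\<And>i. i < n \<Longrightarrow> b (Suc i) = b i + sum_list (xs i)"
  shows "b 0 + sum_list (concat (map xs [0..<n])) = b n"
  using assms by (induction n) (simp_all add: add.assoc [symmetric])

lemma walk_vertices_from_concat_blocks:
  assumes "\<And>i. i < n \<Longrightarrow> b (Suc i) = b i + sum_list (xs i)"
  shows "walk_vertices_from (b 0) (concat (map xs [0..<n]))
           = concat (map (\<lambda>i. walk_vertices_from (b i) (xs i)) [0..<n])"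
  using assms sum_list_concat_blocks [of n b xs]
  by (induction n) (simp_all add: walk_vertices_from_append)

lemma walk_flow_from_concat_blocks:
  assumes "\<And>i. i < n \<Longrightarrow> b (Suc i) = b i + sum_list (xs i)"
  shows "walk_flow_from (b 0) (concat (map xs [0..<n])) = (\<Sum>i<n. walk_flow_from (b i) (xs i))"
  using assms sum_list_concat_blocks [of n b xs]
  by (induction n) (simp_all add: walk_flow_from_append)

section \<open>Hamiltonian cycles and squares\<close>

lemma ham_cycle_rotate:
  assumes ham: "ham_cycle V T ts" and i: "i < length ts"
  defines "u \<equiv> sum_list (take i ts)"
  shows "ham_cycle ((+) (- u) ` V) T (rotate i ts)"
    and "walk_flow (rotate i ts) = translate_flow (- u) (walk_flow ts)"
proof -
  have rot: "rotate i ts = drop i ts @ take i ts"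
    using i by (simp add: rotate_drop_take)
  have "u + sum_list (drop i ts) = 0"
    using ham by (metis u_def append_take_drop_id sum_list_append ham_cycle_def)
  then have drop_sum: "sum_list (drop i ts) = - u"
    by (simp add: add_eq_0_iff)
  have ts_split: "ts = take i ts @ drop i ts"
    by simp
  have rot_sum: "sum_list (rotate i ts) = 0"
    by (simp add: rot drop_sum u_def)
  have "walk_vertices_from 0 (rotate i ts)
          = map ((+) (- u)) (walk_vertices_from u (drop i ts) @ walk_vertices_from 0 (take i ts))"
    using walk_vertices_from_translate [of "- u" u "drop i ts"]
      walk_vertices_from_translate [of "- u" 0 "take i ts"]
    by (simp add: rot walk_vertices_from_append drop_sum)
  moreover have "walk_vertices_from 0 ts = walk_vertices_from 0 (take i ts) @ walk_vertices_from u (drop i ts)"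
    by (subst ts_split) (simp only: walk_vertices_from_append u_def add_0)
  ultimately show "ham_cycle ((+) (- u) ` V) T (rotate i ts)"
    using ham rot_sum by (auto simp: ham_cycle_def walk_vertices_eq distinct_map)
  have "walk_flow ts = walk_flow_from 0 (take i ts) + walk_flow_from u (drop i ts)"
    unfolding walk_flow_def by (subst ts_split) (simp only: walk_flow_from_append u_def add_0)
  then show "walk_flow (rotate i ts) = translate_flow (- u) (walk_flow ts)"
    using walk_flow_from_translate [of "- u" u "drop i ts"]
      walk_flow_from_translate [of "- u" 0 "take i ts"]
    by (simp add: walk_flow_def rot walk_flow_from_append drop_sum translate_flow_def fun_eq_iff)
qed

lemma ham_flows_translate:
  assumes "f \<in> ham_flows UNIV T"
  shows "translate_flow g f \<in> ham_flows UNIV T"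
proof -
  have "translate_flow g (walk_flow ts) \<in> ham_flows UNIV T" if ham: "ham_cycle UNIV T ts" for ts
  proof -
    have "- g \<in> set (walk_vertices ts)"
      using ham by (simp add: ham_cycle_def)
    then obtain i where i: "i < length ts" "sum_list (take i ts) = - g"
      by (auto simp: walk_vertices_def)
    then have "ham_cycle UNIV T (rotate i ts)"
      using ham_cycle_rotate (1) [OF ham i(1)] by simp
    moreover have "walk_flow (rotate i ts) = translate_flow g (walk_flow ts)"
      using ham_cycle_rotate (2) [OF ham i(1)] i(2) by simp
    ultimately show ?thesis
      unfolding ham_flows_def by (metis (mono_tags, lifting) group_closure.base insertI2 mem_Collect_eq)
  qed
  then have "translate_flow g ` ham_flows UNIV T \<subseteq> ham_flows UNIV T"
    unfolding ham_flows_def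
    by (intro group_closure_image_subset) (auto simp: translate_flow_diff)
  with assms show ?thesis
    by blast
qed

lemma length_ham_cycle: "ham_cycle V T ts \<Longrightarrow> length ts = card V"
  using distinct_card [of "walk_vertices ts"] by (simp add: ham_cycle_def walk_vertices_eq)

lemma ham_cycle_mono: "T \<subseteq> T' \<Longrightarrow> ham_cycle V T ts \<Longrightarrow> ham_cycle V T' ts"
  by (auto simp: ham_cycle_def)

definition square_flow :: "'a::ab_group_add \<Rightarrow> 'a \<Rightarrow> 'a \<Rightarrow> 'a \<Rightarrow> 'a \<Rightarrow> int" where
  "square_flow w s t = walk_flow_from w [s, t, - s, - t]"

lemma square_flow_eq_translate: "square_flow w s t = translate_flow w (walk_flow [s, t, - s, - t])"
  using walk_flow_from_translate [of w 0 "[s, t, - s, - t]"]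
  by (simp only: square_flow_def walk_flow_def add_0_right)

lemma square_flow_eq:
  "square_flow w s t = edge_flow w s + edge_flow (w + s) t - edge_flow (w + t) s - edge_flow w t"
  using edge_flow_reverse [of "w + t" s] edge_flow_reverse [of w t]
  by (simp add: square_flow_def add_ac)

lemma walk_flow_from_replicate_Suc:
  "walk_flow_from v (replicate (Suc r) a) = walk_flow_from v (replicate r a) + edge_flow (v + nsmul r a) a"
proof -
  have "replicate (Suc r) a = replicate r a @ [a]"
    by (simp add: replicate_append_same)
  then show ?thesis
    by (simp add: walk_flow_from_append sum_list_replicate_eq_nsmul del: replicate_Suc)
qed

lemma sum_square_flows_ladder:
  "(\<Sum>j<r. square_flow (v + nsmul j s) s t)
     = walk_flow_from v (replicate r s) - walk_flow_from (v + t) (replicate r s)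
       + edge_flow (v + nsmul r s) t - edge_flow v t"
proof (induction r)
  case (Suc r)
  then show ?case
    by (simp only: sum.lessThan_Suc walk_flow_from_replicate_Suc square_flow_eq)
      (simp add: fun_eq_iff add_ac)
qed (simp add: fun_eq_iff)

definition square_flows :: "'a::ab_group_add \<Rightarrow> 'a set \<Rightarrow> ('a \<Rightarrow> 'a \<Rightarrow> int) set" where
  "square_flows s T = {square_flow w s t | w t. t \<in> T}"

section \<open>The zigzag lift\<close>

locale zigzag_lift =
  fixes s :: "'a::ab_group_add" and T :: "'a set" and ts :: "'a list" and k :: nat
  assumes ham: "ham_cycle (group_closure T) T ts"
    and even_length: "even (length ts)"
    and k_pos: "0 < k"
    and multiples_inj:
      "\<And>j j'. j < k \<Longrightarrow> j' < k \<Longrightarrow> nsmul j s - nsmul j' s \<in> group_closure T \<Longrightarrow> j = j'"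
    and coset_cover: "\<And>x. \<exists>y\<in>group_closure T. \<exists>j<k. x = y + nsmul j s"
begin

definition vertex :: "nat \<Rightarrow> 'a" where
  "vertex i = sum_list (take i ts)"

definition block :: "nat \<Rightarrow> 'a list" where
  "block i = replicate (k - 1) (if even i then s else - s) @ [ts ! i]"

definition block_start :: "nat \<Rightarrow> 'a" where
  "block_start i = vertex i + (if even i then 0 else nsmul (k - 1) s)"

definition zigzag :: "'a list" where
  "zigzag = concat (map block [0..<length ts])"

definition column_flow :: "nat \<Rightarrow> 'a \<Rightarrow> 'a \<Rightarrow> int" where
  "column_flow i = (if even i then 0 else walk_flow_from (vertex i) (replicate (k - 1) s))"

definition ladder :: "nat \<Rightarrow> 'a \<Rightarrow> 'a \<Rightarrow> int" where
  "ladder i = (\<Sum>j<k - 1. square_flow (vertex i + nsmul j s) s (ts ! i))"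

lemma vertex_Suc: "i < length ts \<Longrightarrow> vertex (Suc i) = vertex i + ts ! i"
  by (simp add: vertex_def take_Suc_conv_app_nth)

lemma vertex_length: "vertex (length ts) = 0"
  using ham by (simp add: vertex_def ham_cycle_def)

lemma vertex_inj: "i < length ts \<Longrightarrow> i' < length ts \<Longrightarrow> vertex i = vertex i' \<Longrightarrow> i = i'"
  using ham by (fastforce simp: ham_cycle_def walk_vertices_def vertex_def distinct_conv_nth)

lemma vertex_image: "vertex ` {..<length ts} = group_closure T"
  using ham by (simp add: ham_cycle_def walk_vertices_def vertex_def atLeast0LessThan)

lemma step_mem: "i < length ts \<Longrightarrow> ts ! i \<in> T"
  using ham by (auto simp: ham_cycle_def)

lemma block_start_0: "block_start 0 = 0"
  by (simp add: block_start_def vertex_def)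

lemma block_start_Suc: "i < length ts \<Longrightarrow> block_start (Suc i) = block_start i + sum_list (block i)"
  using k_pos
  by (simp add: block_start_def block_def vertex_Suc sum_list_replicate_eq_nsmul nsmul_uminus add_ac)

lemma block_vertices:
  "walk_vertices_from (block_start i) (block i)
     = (if even i then id else rev) (map (\<lambda>j. vertex i + nsmul j s) [0..<k])"
proof -
  have "Suc (k - 1) = k"
    using k_pos by simp
  then have up: "walk_vertices_from (vertex i) (replicate (k - 1) s @ [ts ! i])
                   = map (\<lambda>j. vertex i + nsmul j s) [0..<k]"
    using walk_vertices_from_replicate [of "vertex i" "k - 1" s "ts ! i"] by (simp only:)
  have down: "walk_vertices_from (vertex i + nsmul (k - 1) s) (replicate (k - 1) (- s) @ [ts ! i])
                = rev (walk_vertices_from (vertex i) (replicate (k - 1) s @ [ts ! i]))"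
    using walk_vertices_from_reverse [of "vertex i" "replicate (k - 1) s" "ts ! i" "ts ! i"]
    by (simp only: sum_list_replicate_eq_nsmul map_replicate rev_replicate)
  show ?thesis
    using up down by (simp add: block_start_def block_def)
qed

lemma block_flow:
  assumes "i < length ts"
  shows "walk_flow_from (block_start i) (block i)
           = edge_flow (vertex i) (ts ! i) + (if even i then ladder i else 0)
             + (column_flow (Suc i) - column_flow i)"
proof (cases "even i")
  case True
  have "walk_flow_from (vertex i) (replicate (k - 1) s @ [ts ! i])
          = walk_flow_from (vertex i) (replicate (k - 1) s) + edge_flow (vertex i + nsmul (k - 1) s) (ts ! i)"
    by (simp add: walk_flow_from_append sum_list_replicate_eq_nsmul)
  then show ?thesis
    using True vertex_Suc [OF assms]
    by (simp add: block_start_def block_def ladder_def column_flow_def sum_square_flows_ladder fun_eq_iff)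
next
  case False
  have "walk_flow_from (vertex i + nsmul (k - 1) s) (replicate (k - 1) (- s) @ [ts ! i])
        = - walk_flow_from (vertex i) (replicate (k - 1) s) + edge_flow (vertex i) (ts ! i)"
    using walk_flow_from_reverse [of "vertex i" "replicate (k - 1) s"]
    by (simp add: walk_flow_from_append sum_list_replicate_eq_nsmul nsmul_uminus)
  then show ?thesis
    using False by (simp add: block_start_def block_def column_flow_def fun_eq_iff)
qed

lemma vertex_mem: "i < length ts \<Longrightarrow> vertex i \<in> group_closure T"
  using vertex_image by blast

lemma distinct_column: "distinct (map (\<lambda>j. vertex i + nsmul j s) [0..<k])"
  using multiples_inj by (auto simp: distinct_map inj_on_def)

lemma columns_disjoint:
  assumes "i < length ts" "i' < length ts" "i \<noteq> i'"
  shows "set (map (\<lambda>j. vertex i + nsmul j s) [0..<k]) \<inter> set (map (\<lambda>j. vertex i' + nsmul j s) [0..<k]) = {}"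
proof -
  have False if "j < k" "j' < k" "vertex i + nsmul j s = vertex i' + nsmul j' s" for j j'
  proof -
    have "nsmul j s - nsmul j' s = vertex i' - vertex i"
      using that(3) by (simp add: algebra_simps)
    then have "nsmul j s - nsmul j' s \<in> group_closure T"
      using vertex_mem assms by (simp add: group_closure.diff)
    then have "j = j'"
      using multiples_inj that by blast
    then show False
      using that(3) vertex_inj assms by simp
  qed
  then show ?thesis
    by fastforce
qed

lemma columns_cover: "(\<Union>i<length ts. set (map (\<lambda>j. vertex i + nsmul j s) [0..<k])) = UNIV"
proof -
  have "\<exists>i<length ts. \<exists>j<k. x = vertex i + nsmul j s" for x
    using coset_cover [of x] vertex_image by (metis imageE lessThan_iff)
  then show ?thesis
    by fastforce
qed

lemma zigzag_ham_cycle: "ham_cycle UNIV (insert s (insert (- s) T)) zigzag"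
proof -
  have vertices: "walk_vertices zigzag = concat (map (\<lambda>i.
      (if even i then id else rev) (map (\<lambda>j. vertex i + nsmul j s) [0..<k])) [0..<length ts])"
    using walk_vertices_from_concat_blocks [of "length ts" block_start block] block_start_Suc
    by (simp add: walk_vertices_eq zigzag_def block_vertices block_start_0)
  have orient: "set ((if even i then id else rev) xs) = set xs"
    "distinct ((if even i then id else rev) xs) = distinct xs" for i and xs :: "'a list"
    by simp_all
  have "distinct (walk_vertices zigzag)"
    unfolding vertices
  proof (rule distinct_concat_map)
    fix i i'
    assume "i \<in> set [0..<length ts]" "i' \<in> set [0..<length ts]" "i \<noteq> i'"
    then show "set ((if even i then id else rev) (map (\<lambda>j. vertex i + nsmul j s) [0..<k]))
        \<inter> set ((if even i' then id else rev) (map (\<lambda>j. vertex i' + nsmul j s) [0..<k])) = {}"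
      using columns_disjoint by (simp add: orient)
  qed (simp_all add: orient distinct_column)
  moreover have "set (walk_vertices zigzag) = UNIV"
    unfolding vertices using columns_cover by (simp add: orient atLeast0LessThan)
  moreover have "sum_list zigzag = 0"
    using sum_list_concat_blocks [of "length ts" block_start block] block_start_Suc
      even_length vertex_length
    by (simp add: zigzag_def block_start_def vertex_def)
  moreover have "set zigzag \<subseteq> insert s (insert (- s) T)"
    using step_mem by (auto simp: zigzag_def block_def)
  moreover have "3 \<le> length zigzag"
  proof -
    have "3 \<le> length ts"
      using ham by (simp add: ham_cycle_def)
    also have "\<dots> \<le> length ts * k"
      using k_pos by simp
    finally show ?thesis
      using k_pos by (simp add: zigzag_def block_def length_concat comp_def sum_list_triv)
  qed
  ultimately show ?thesis
    by (simp add: ham_cycle_def)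
qed

lemma walk_flow_zigzag:
  "walk_flow zigzag = walk_flow ts + (\<Sum>i<length ts. if even i then ladder i else 0)"
proof -
  have "walk_flow zigzag = (\<Sum>i<length ts. walk_flow_from (block_start i) (block i))"
    using walk_flow_from_concat_blocks [of "length ts" block_start block] block_start_Suc
    by (simp add: walk_flow_def zigzag_def block_start_0)
  also have "\<dots> = (\<Sum>i<length ts. edge_flow (vertex i) (ts ! i))
                    + (\<Sum>i<length ts. if even i then ladder i else 0)
                    + (\<Sum>i<length ts. column_flow (Suc i) - column_flow i)"
    by (simp add: block_flow sum.distrib)
  also have "(\<Sum>i<length ts. column_flow (Suc i) - column_flow i) = 0"
    using even_length by (simp only: sum_lessThan_telescope) (simp add: column_flow_def)
  also have "(\<Sum>i<length ts. edge_flow (vertex i) (ts ! i)) = walk_flow ts"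
    by (simp add: walk_flow_def walk_flow_from_conv_sum [of 0] vertex_def)
  finally show ?thesis
    by (simp add: fun_eq_iff)
qed

end

lemma ham_cycle_lift:
  fixes S :: "'a::{ab_group_add,finite} set" and s :: 'a
  defines "T \<equiv> S - {s, - s}"
  assumes gen: "group_closure S = UNIV" and "s \<in> S" "- s \<in> S"
    and ham: "ham_cycle (group_closure T) T ts"
    and even_card: "even (card (group_closure T))"
  obtains Z where "ham_cycle UNIV S Z"
    and "walk_flow Z - walk_flow ts \<in> group_closure (square_flows s T)"
proof -
  have "group_closure (insert s T) = UNIV"
    using gen group_closure_subset_insert_Diff [of S s] by (auto simp: T_def)
  then obtain k where "0 < k"
    and "\<And>j j'. j < k \<Longrightarrow> j' < k \<Longrightarrow> nsmul j s - nsmul j' s \<in> group_closure T \<Longrightarrow> j = j'"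
    and "\<And>x. \<exists>y\<in>group_closure T. \<exists>j<k. x = y + nsmul j s"
    by (rule coset_decomposition) auto
  moreover have "even (length ts)"
    using even_card length_ham_cycle [OF ham] by simp
  ultimately interpret zigzag_lift s T ts k
    using ham by unfold_locales
  show thesis
  proof (rule that)
    have "insert s (insert (- s) T) \<subseteq> S"
      using \<open>s \<in> S\<close> \<open>- s \<in> S\<close> by (auto simp: T_def)
    then show "ham_cycle UNIV S zigzag"
      using zigzag_ham_cycle by (rule ham_cycle_mono)
    have "square_flow w s (ts ! i) \<in> group_closure (square_flows s T)" if "i < length ts" for w i
      using step_mem [OF that] by (auto simp: square_flows_def intro: group_closure.base)
    then have "ladder i \<in> group_closure (square_flows s T)" if "i < length ts" for i
      unfolding ladder_def using that by (blast intro: sum_in_group_closure)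
    then show "walk_flow zigzag - walk_flow ts \<in> group_closure (square_flows s T)"
      unfolding walk_flow_zigzag by (auto intro: sum_in_group_closure)
  qed
qed

lemma scaled_ham_flows_subset:
  fixes S :: "'a::{ab_group_add,finite} set" and s :: 'a and c :: int
  defines "T \<equiv> S - {s, - s}"
  assumes gen: "group_closure S = UNIV" and "s \<in> S" "- s \<in> S"
    and even_card: "even (card (group_closure T))"
    and squares: "\<forall>t \<in> T. (\<lambda>x a. c * walk_flow [s, t, - s, - t] x a) \<in> ham_flows UNIV S"
  shows "(\<lambda>f x a. c * f x a) ` ham_flows (group_closure T) T \<subseteq> ham_flows UNIV S"
proof -
  define scale where "scale f = (\<lambda>x a. c * f x a)" for f :: "'a \<Rightarrow> 'a \<Rightarrow> int"
  have scale_diff: "scale (f - g) = scale f - scale g" for f g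
    by (simp add: scale_def fun_eq_iff algebra_simps)
  have "scale (square_flow w s t) \<in> ham_flows UNIV S" if "t \<in> T" for w t
  proof -
    have "scale (square_flow w s t) = translate_flow w (scale (walk_flow [s, t, - s, - t]))"
      by (simp add: square_flow_eq_translate scale_def translate_flow_def)
    then show ?thesis
      using ham_flows_translate squares that by (simp add: scale_def) blast
  qed
  then have scaled_squares: "scale ` group_closure (square_flows s T) \<subseteq> ham_flows UNIV S"
    unfolding ham_flows_def
    by (intro group_closure_image_subset scale_diff) (auto simp: square_flows_def)
  have scaled_cycles: "scale (walk_flow Z) \<in> ham_flows UNIV S" if "ham_cycle UNIV S Z" for Z
    unfolding scale_def ham_flows_def
    by (rule int_scale_in_group_closure) (use that in \<open>auto intro: group_closure.base\<close>)
  have "scale (walk_flow ts) \<in> ham_flows UNIV S"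
    if ham: "ham_cycle (group_closure T) T ts" for ts
  proof -
    obtain Z where Z: "ham_cycle UNIV S Z"
      and diff: "walk_flow Z - walk_flow ts \<in> group_closure (square_flows s T)"
      using ham_cycle_lift [OF gen assms(3,4), of ts, folded T_def] ham even_card by blast
    have "scale (walk_flow ts) = scale (walk_flow Z) - scale (walk_flow Z - walk_flow ts)"
      by (simp add: scale_diff)
    moreover have "scale (walk_flow Z - walk_flow ts) \<in> ham_flows UNIV S"
      using diff scaled_squares by blast
    ultimately show ?thesis
      using scaled_cycles [OF Z]
      unfolding ham_flows_def by (simp add: group_closure.diff)
  qed
  then have "scale ` ham_flows (group_closure T) T \<subseteq> ham_flows UNIV S"
    unfolding ham_flows_def by (intro group_closure_image_subset scale_diff) auto
  then show ?thesis
    by (simp add: scale_def)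
qed

theorem lemma5p9:
  fixes S :: "'a::{ab_group_add, finite} set" and s :: 'a
  assumes even_order: "even (card (UNIV :: 'a set))"
    and sym: "\<And>a. a \<in> S \<Longrightarrow> - a \<in> S"
    and gen: "group_closure S = UNIV"
    and sS: "s \<in> S"
    and G'_card: "card (group_closure (S - {s, - s})) \<ge> 4"
    and G'_even: "even (card (group_closure (S - {s, - s})))"
  shows "((\<forall>t \<in> S - {s, - s}. walk_flow [s, t, - s, - t] \<in> ham_flows UNIV S)
            \<longrightarrow> ham_flows (group_closure (S - {s, - s})) (S - {s, - s}) \<subseteq> ham_flows UNIV S)
       \<and> ((\<forall>t \<in> S - {s, - s}. (\<lambda>x a. 2 * walk_flow [s, t, - s, - t] x a) \<in> ham_flows UNIV S)
            \<longrightarrow> (\<lambda>f x a. 2 * f x a) ` ham_flows (group_closure (S - {s, - s})) (S - {s, - s})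
                \<subseteq> ham_flows UNIV S)"
proof -
  note scaled = scaled_ham_flows_subset [OF gen sS sym [OF sS] G'_even]
  show ?thesis
    using scaled [of 1] scaled [of 2] by simp
qed

end
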